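(* Let $G$ be a graph, let $k\ge 0$, let $C\subseteq V(G)$, and let $x_0\in V(G)\setminus C$, such that $G[C]$ is connected, $x_0$ has a neighbour in $C$, and $\chi(C)>k\,\chi^1(G)$. Then there is an induced path $x_0\hbox{-}\cdots\hbox{-}x_k$ of $G$ with $x_1,\ldots,x_k\in C$, and a subset $C'$ of $C$, such that: $x_0,\ldots,x_k\notin C'$; $G[C']$ is connected; $x_k$ has a neighbour in $C'$, and $x_0,\ldots,x_{k-1}$ have no neighbours in $C'$; and $\chi(C')\ge \chi(C)-k\,\chi^1(G)$.
   Context: Graphs are finite and simple. For $X\subseteq V(G)$, $\chi(X)$ means $\chi(G[X])$. $N^1[v]$ is the set consisting of $v$ and its neighbours, and $\chi^1(G)$ is the maximum of $\chi(N^1[v])$ over all $v\in V(G)$ (and $0$ for the null graph). *)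

theory Defs
  imports Main
begin

definition graph :: "'a set \<Rightarrow> ('a \<Rightarrow> 'a \<Rightarrow> bool) \<Rightarrow> bool" where
  "graph V E \<longleftrightarrow> finite V \<and> (\<forall>u v. E u v \<longrightarrow> u \<in> V \<and> v \<in> V)
     \<and> (\<forall>u v. E u v \<longrightarrow> E v u) \<and> (\<forall>v. \<not> E v v)"

definition colourable :: "('a \<Rightarrow> 'a \<Rightarrow> bool) \<Rightarrow> 'a set \<Rightarrow> nat \<Rightarrow> bool" where
  "colourable E X k \<longleftrightarrow> (\<exists>f::'a \<Rightarrow> nat. (\<forall>v\<in>X. f v < k)
      \<and> (\<forall>u\<in>X. \<forall>v\<in>X. E u v \<longrightarrow> f u \<noteq> f v))"

definition chi :: "('a \<Rightarrow> 'a \<Rightarrow> bool) \<Rightarrow> 'a set \<Rightarrow> nat" where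
  "chi E X = (LEAST k. colourable E X k)"

definition N1 :: "('a \<Rightarrow> 'a \<Rightarrow> bool) \<Rightarrow> 'a \<Rightarrow> 'a set" where
  "N1 E v = insert v {u. E v u}"

definition chi1 :: "'a set \<Rightarrow> ('a \<Rightarrow> 'a \<Rightarrow> bool) \<Rightarrow> nat" where
  "chi1 V E = (if V = {} then 0 else Max ((\<lambda>v. chi E (N1 E v)) ` V))"

definition connected_in :: "('a \<Rightarrow> 'a \<Rightarrow> bool) \<Rightarrow> 'a set \<Rightarrow> bool" where
  "connected_in E C \<longleftrightarrow> C \<noteq> {} \<and>
     (\<forall>u\<in>C. \<forall>v\<in>C. (\<lambda>a b. E a b \<and> a \<in> C \<and> b \<in> C)\<^sup>*\<^sup>* u v)"

definition induced_path :: "'a set \<Rightarrow> ('a \<Rightarrow> 'a \<Rightarrow> bool) \<Rightarrow> (nat \<Rightarrow> 'a) \<Rightarrow> nat \<Rightarrow> bool" where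
  "induced_path V E x k \<longleftrightarrow> (\<forall>i\<le>k. x i \<in> V) \<and> inj_on x {0..k}
     \<and> (\<forall>i\<le>k. \<forall>j\<le>k. E (x i) (x j) \<longleftrightarrow> (i = j + 1 \<or> j = i + 1))"

end

theory Submission
  imports Defs
begin

text \<open>Induction on \<open>k\<close>. Given the path \<open>x\<^sub>0 \<dots> x\<^sub>k\<close> and \<open>C'\<close>, remove from \<open>C'\<close> the
  neighbours \<open>N\<close> of \<open>x\<^sub>k\<close>: since \<open>\<chi>(C' \<inter> N) \<le> \<chi>\<^sup>1(G)\<close>, this costs at most \<open>\<chi>\<^sup>1(G)\<close> colours, and
  some component \<open>D\<close> of \<open>C' - N\<close> has the chromatic number of all of \<open>C' - N\<close>. As \<open>C'\<close> is
  connected and meets \<open>N\<close>, some \<open>y \<in> C' \<inter> N\<close> has a neighbour in \<open>D\<close>; it extends the path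
  (it is adjacent to \<open>x\<^sub>k\<close> only), and \<open>D\<close> becomes the new \<open>C'\<close>.\<close>

definition induced_adj :: "('a \<Rightarrow> 'a \<Rightarrow> bool) \<Rightarrow> 'a set \<Rightarrow> 'a \<Rightarrow> 'a \<Rightarrow> bool" where
  "induced_adj E X = (\<lambda>a b. E a b \<and> a \<in> X \<and> b \<in> X)"

definition component :: "('a \<Rightarrow> 'a \<Rightarrow> bool) \<Rightarrow> 'a set \<Rightarrow> 'a \<Rightarrow> 'a set" where
  "component E X d = {w. (induced_adj E X)\<^sup>*\<^sup>* d w}"

definition approach ::
    "'a set \<Rightarrow> ('a \<Rightarrow> 'a \<Rightarrow> bool) \<Rightarrow> 'a set \<Rightarrow> (nat \<Rightarrow> 'a) \<Rightarrow> nat \<Rightarrow> 'a set \<Rightarrow> bool" where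
  "approach V E C x k C' \<longleftrightarrow> induced_path V E x k \<and> (\<forall>i\<in>{1..k}. x i \<in> C)
     \<and> C' \<subseteq> C \<and> (\<forall>i\<le>k. x i \<notin> C') \<and> connected_in E C'
     \<and> (\<exists>c\<in>C'. E (x k) c) \<and> (\<forall>i<k. \<forall>c\<in>C'. \<not> E (x i) c)"

lemma induced_adj_iff: "induced_adj E X a b \<longleftrightarrow> E a b \<and> a \<in> X \<and> b \<in> X"
  by (simp add: induced_adj_def)

lemma connected_in_iff: "connected_in E C \<longleftrightarrow> C \<noteq> {} \<and> (\<forall>u\<in>C. \<forall>v\<in>C. (induced_adj E C)\<^sup>*\<^sup>* u v)"
  by (simp add: connected_in_def induced_adj_def)

lemma graph_sym: "graph V E \<Longrightarrow> E u v \<Longrightarrow> E v u"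
  and graph_irrefl: "graph V E \<Longrightarrow> \<not> E v v"
  and graph_edge_in_V: "graph V E \<Longrightarrow> E u v \<Longrightarrow> u \<in> V \<and> v \<in> V"
  and graph_finite: "graph V E \<Longrightarrow> finite V"
  by (simp_all add: graph_def)

lemma colourable_subset: "colourable E X k \<Longrightarrow> Y \<subseteq> X \<Longrightarrow> colourable E Y k"
  unfolding colourable_def by blast

lemma colourable_mono: "colourable E X k \<Longrightarrow> k \<le> m \<Longrightarrow> colourable E X m"
  unfolding colourable_def by (fastforce intro: order_less_le_trans)

lemma colourable_card: assumes "graph V E" "X \<subseteq> V" shows "colourable E X (card X)"
proof -
  have "finite X" using assms graph_finite finite_subset by blast
  then obtain f where f: "bij_betw f X {0..<card X}" using ex_bij_betw_finite_nat by blast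
  show ?thesis unfolding colourable_def
  proof (intro exI[of _ f] conjI ballI impI)
    fix v assume "v \<in> X" then show "f v < card X" using f bij_betw_apply by fastforce
  next
    fix u v assume "u \<in> X" "v \<in> X" "E u v"
    then show "f u \<noteq> f v" using f graph_irrefl[OF assms(1)] unfolding bij_betw_def inj_on_def by blast
  qed
qed

lemma colourable_chi: "graph V E \<Longrightarrow> X \<subseteq> V \<Longrightarrow> colourable E X (chi E X)"
  unfolding chi_def by (rule LeastI, rule colourable_card)

lemma chi_le: "colourable E X k \<Longrightarrow> chi E X \<le> k"
  unfolding chi_def by (rule Least_le)

lemma chi_empty: "chi E {} = 0"
  using chi_le[of E "{}" 0] by (simp add: colourable_def)

lemma chi_mono: "graph V E \<Longrightarrow> X \<subseteq> V \<Longrightarrow> Y \<subseteq> X \<Longrightarrow> chi E Y \<le> chi E X"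
  by (meson colourable_chi chi_le colourable_subset)

lemma colourable_split:
  assumes "colourable E (X - N) a" "colourable E (X \<inter> N) b" shows "colourable E X (a + b)"
proof -
  obtain f where f: "\<forall>v\<in>X-N. f v < a" "\<forall>u\<in>X-N. \<forall>v\<in>X-N. E u v \<longrightarrow> f u \<noteq> f v"
    using assms(1) unfolding colourable_def by blast
  obtain g where g: "\<forall>v\<in>X\<inter>N. g v < b" "\<forall>u\<in>X\<inter>N. \<forall>v\<in>X\<inter>N. E u v \<longrightarrow> g u \<noteq> g v"
    using assms(2) unfolding colourable_def by blast
  show ?thesis unfolding colourable_def
  proof (intro exI[of _ "\<lambda>v. if v \<in> N then a + g v else f v"] conjI ballI impI)
    fix v assume "v \<in> X" then show "(if v \<in> N then a + g v else f v) < a + b"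
      using f(1) g(1) by (cases "v \<in> N") (auto intro: trans_less_add1)
  next
    fix u v assume "u \<in> X" "v \<in> X" "E u v"
    then show "(if u \<in> N then a + g u else f u) \<noteq> (if v \<in> N then a + g v else f v)"
      using f g by (cases "u \<in> N"; cases "v \<in> N") force+
  qed
qed

lemma chi_le_diff_plus_inter: "graph V E \<Longrightarrow> X \<subseteq> V \<Longrightarrow> chi E X \<le> chi E (X - N) + chi E (X \<inter> N)"
  by (meson colourable_chi chi_le colourable_split Diff_subset inf_le1 order_trans)

lemma chi_le_chi1: assumes "graph V E" "v \<in> V" "Y \<subseteq> N1 E v" shows "chi E Y \<le> chi1 V E"
proof -
  have "N1 E v \<subseteq> V" unfolding N1_def using assms(2) graph_edge_in_V[OF assms(1)] by auto
  then have "chi E Y \<le> chi E (N1 E v)" using chi_mono assms by metis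
  also have "\<dots> \<le> chi1 V E"
    unfolding chi1_def using graph_finite[OF assms(1)] assms(2) by auto
  finally show ?thesis .
qed

lemma self_in_component: "d \<in> component E X d"
  by (simp add: component_def)

lemma component_subset: "d \<in> X \<Longrightarrow> component E X d \<subseteq> X"
  unfolding component_def by (auto elim: rtranclp.cases simp: induced_adj_iff)

lemma component_closed: "w \<in> component E X d \<Longrightarrow> induced_adj E X w w' \<Longrightarrow> w' \<in> component E X d"
  unfolding component_def by (simp add: rtranclp.rtrancl_into_rtrancl)

lemma induced_adj_rtranclp_sym:
  assumes "graph V E" "(induced_adj E X)\<^sup>*\<^sup>* a b" shows "(induced_adj E X)\<^sup>*\<^sup>* b a"
  using assms(2)
proof (induction rule: rtranclp_induct)
  case (step b c)
  then have "induced_adj E X c b" using graph_sym[OF assms(1)] by (auto simp: induced_adj_iff)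
  then show ?case using step.IH converse_rtranclp_into_rtranclp by metis
qed simp

lemma component_eq:
  assumes "graph V E" "induced_adj E X u v" shows "component E X u = component E X v"
proof -
  have "induced_adj E X v u" using assms graph_sym by (auto simp: induced_adj_iff)
  then show ?thesis using assms(2) unfolding component_def
    by (auto intro: converse_rtranclp_into_rtranclp)
qed

lemma induced_adj_component:
  assumes "(induced_adj E X)\<^sup>*\<^sup>* a b" "a \<in> component E X d"
  shows "(induced_adj E (component E X d))\<^sup>*\<^sup>* a b \<and> b \<in> component E X d"
  using assms(1)
proof (induction rule: rtranclp_induct)
  case (step b c)
  then have "c \<in> component E X d" using component_closed by metis
  with step have "induced_adj E (component E X d) b c" by (simp add: induced_adj_iff)
  with step show ?case using \<open>c \<in> component E X d\<close> by (metis rtranclp.rtrancl_into_rtrancl)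
qed (use assms(2) in simp)

lemma connected_in_component: assumes "graph V E" shows "connected_in E (component E X d)"
  unfolding connected_in_iff
proof (intro conjI ballI)
  show "component E X d \<noteq> {}" using self_in_component by fast
next
  fix u v assume u: "u \<in> component E X d" and "v \<in> component E X d"
  then have "(induced_adj E X)\<^sup>*\<^sup>* u v" using induced_adj_rtranclp_sym[OF assms]
    unfolding component_def by (meson mem_Collect_eq rtranclp_trans)
  then show "(induced_adj E (component E X d))\<^sup>*\<^sup>* u v" using induced_adj_component[OF _ u] by blast
qed

text \<open>Adjacent vertices lie in the same component, so one colouring per component glues.\<close>
lemma colourable_if_components_colourable:
  assumes "graph V E" "\<forall>d\<in>X. colourable E (component E X d) m" shows "colourable E X m"
proof -
  define proper where "proper S f \<longleftrightarrow> (\<forall>v\<in>S. f v < m) \<and> (\<forall>u\<in>S. \<forall>v\<in>S. E u v \<longrightarrow> f u \<noteq> f v)"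
    for S and f :: "'a \<Rightarrow> nat"
  define F where "F S = (SOME f. proper S f)" for S
  have F: "proper (component E X d) (F (component E X d))" if "d \<in> X" for d
  proof -
    have "\<exists>f. proper (component E X d) f"
      using assms(2) that unfolding proper_def colourable_def by blast
    then show ?thesis unfolding F_def by (rule someI_ex)
  qed
  show ?thesis unfolding colourable_def
  proof (intro exI[of _ "\<lambda>v. F (component E X v) v"] conjI ballI impI)
    fix v assume "v \<in> X"
    then show "F (component E X v) v < m"
      using F[OF \<open>v \<in> X\<close>] self_in_component[of v E X] unfolding proper_def by blast
  next
    fix u v assume uv: "u \<in> X" "v \<in> X" "E u v"
    then have "induced_adj E X u v" by (simp add: induced_adj_iff)
    then have same: "component E X u = component E X v" by (rule component_eq[OF assms(1)])
    have "u \<in> component E X v" using self_in_component[of u E X] unfolding same .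
    then show "F (component E X u) u \<noteq> F (component E X v) v"
      using F[OF uv(2)] self_in_component[of v E X] uv(3) unfolding same proper_def by blast
  qed
qed

lemma chi_le_component:
  assumes "graph V E" "X \<subseteq> V" "X \<noteq> {}" shows "\<exists>d\<in>X. chi E X \<le> chi E (component E X d)"
proof (rule ccontr)
  assume "\<not> ?thesis"
  then have less: "\<forall>d\<in>X. chi E (component E X d) < chi E X" by auto
  have "\<forall>d\<in>X. colourable E (component E X d) (chi E X - 1)"
  proof
    fix d assume d: "d \<in> X"
    then have "colourable E (component E X d) (chi E (component E X d))"
      using colourable_chi[OF assms(1)] component_subset assms(2) by (meson order_trans)
    then show "colourable E (component E X d) (chi E X - 1)"
      using less d colourable_mono by fastforce
  qed
  then have "chi E X \<le> chi E X - 1" using colourable_if_components_colourable[OF assms(1)] chi_le by blast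
  moreover have "chi E X > 0" using less assms(3) by (metis ex_in_conv gr0I not_less0)
  ultimately show False by linarith
qed

lemma component_outside_neighbourhood:
  assumes G: "graph V E" and "X \<subseteq> V" "v \<in> V" and big: "chi1 V E < chi E X"
  shows "\<exists>d\<in>X - {u. E v u}. chi E X \<le> chi E (component E (X - {u. E v u}) d) + chi1 V E"
proof -
  let ?N = "{u. E v u}"
  have "X \<inter> ?N \<subseteq> N1 E v" unfolding N1_def by blast
  then have "chi E (X \<inter> ?N) \<le> chi1 V E" by (rule chi_le_chi1[OF G \<open>v \<in> V\<close>])
  then have drop: "chi E X \<le> chi E (X - ?N) + chi1 V E"
    using chi_le_diff_plus_inter[OF G \<open>X \<subseteq> V\<close>, of ?N] by linarith
  have "X - ?N \<noteq> {}"
  proof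
    assume "X - ?N = {}"
    then have "chi E (X - ?N) = 0" by (metis chi_empty)
    with big drop show False by linarith
  qed
  moreover have "X - ?N \<subseteq> V" using \<open>X \<subseteq> V\<close> by blast
  ultimately obtain d where "d \<in> X - ?N" "chi E (X - ?N) \<le> chi E (component E (X - ?N) d)"
    using chi_le_component[OF G] by blast
  with drop show ?thesis by force
qed

text \<open>Follow a path in \<open>C\<close> from \<open>d\<close> to a vertex of \<open>N\<close>: it leaves the component of \<open>d\<close> in
  \<open>C - N\<close> only by entering \<open>N\<close>.\<close>
lemma component_edge_to:
  assumes "connected_in E C" "d \<in> C - N" "N \<inter> C \<noteq> {}"
  shows "\<exists>y\<in>N \<inter> C. \<exists>z\<in>component E (C - N) d. E z y"
proof -
  let ?D = "component E (C - N) d"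
  obtain n where n: "n \<in> N \<inter> C" using assms(3) by blast
  have "w \<in> ?D \<or> (\<exists>y\<in>N \<inter> C. \<exists>z\<in>?D. E z y)" if "(induced_adj E C)\<^sup>*\<^sup>* d w" for w
    using that
  proof (induction rule: rtranclp_induct)
    case (step w w')
    then show ?case
      using component_subset[OF assms(2)] component_closed[where E=E and X="C - N" and d=d and w=w and w'=w']
      by (cases "w' \<in> N") (auto simp: induced_adj_iff)
  qed (simp add: self_in_component)
  moreover have "(induced_adj E C)\<^sup>*\<^sup>* d n" using assms n unfolding connected_in_iff by blast
  moreover have "n \<notin> ?D" using component_subset[OF assms(2)] n by blast
  ultimately show ?thesis by blast
qed

lemma induced_path_extend:
  assumes G: "graph V E" and ip: "induced_path V E x k" and "y \<in> V" and "E (x k) y"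
    and "\<forall>i<k. \<not> E (x i) y" and "\<forall>i\<le>k. x i \<noteq> y"
  shows "induced_path V E (x(Suc k := y)) (Suc k)"
proof -
  let ?x = "x(Suc k := y)"
  have in_V: "?x i \<in> V" if "i \<le> Suc k" for i
    using ip \<open>y \<in> V\<close> that unfolding induced_path_def by (cases "i = Suc k") auto
  have "inj_on ?x {0..k}" using ip unfolding induced_path_def inj_on_def by simp
  moreover have "y \<notin> ?x ` {0..k}" using assms(6) by auto
  moreover have "{0..Suc k} = insert (Suc k) {0..k}" by auto
  ultimately have inj: "inj_on ?x {0..Suc k}" by simp
  have old: "E (?x i) (?x j) \<longleftrightarrow> (i = j + 1 \<or> j = i + 1)" if "i \<le> k" "j \<le> k" for i j
    using ip that unfolding induced_path_def by simp
  have new: "E (x i) y \<longleftrightarrow> i = k" "E y (x i) \<longleftrightarrow> i = k" if "i \<le> k" for i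
    using that assms(4,5) graph_sym[OF G] by (metis le_neq_implies_less)+
  have "E (?x i) (?x j) \<longleftrightarrow> (i = j + 1 \<or> j = i + 1)" if "i \<le> Suc k" "j \<le> Suc k" for i j
    using that old new graph_irrefl[OF G] by (cases "i = Suc k"; cases "j = Suc k") auto
  with in_V inj show ?thesis unfolding induced_path_def by blast
qed

lemma approach_step:
  assumes G: "graph V E" and CV: "C \<subseteq> V" and A: "approach V E C x k C'"
    and big: "chi1 V E < chi E C'"
  shows "\<exists>y D. approach V E C (x(Suc k := y)) (Suc k) D \<and> chi E C' \<le> chi E D + chi1 V E"
proof -
  have ip: "induced_path V E x k" and xC: "\<forall>i\<in>{1..k}. x i \<in> C" and C'C: "C' \<subseteq> C"
    and xnot: "\<forall>i\<le>k. x i \<notin> C'" and conn: "connected_in E C'"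
    and nb: "\<exists>c\<in>C'. E (x k) c" and nonb: "\<forall>i<k. \<forall>c\<in>C'. \<not> E (x i) c"
    using A unfolding approach_def by auto
  define N where "N = {u. E (x k) u}"
  have xkV: "x k \<in> V" using ip unfolding induced_path_def by simp
  have C'V: "C' \<subseteq> V" using C'C CV by blast
  obtain d where d: "d \<in> C' - N" and dchi: "chi E C' \<le> chi E (component E (C' - N) d) + chi1 V E"
    using component_outside_neighbourhood[OF G C'V xkV big] unfolding N_def by blast
  define D where "D = component E (C' - N) d"
  have DC': "D \<subseteq> C' - N" unfolding D_def using component_subset[OF d] .
  have "N \<inter> C' \<noteq> {}" using nb unfolding N_def by blast
  then obtain y z where y: "y \<in> N \<inter> C'" and z: "z \<in> D" and zy: "E z y"
    using component_edge_to[OF conn d] unfolding D_def by blast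
  let ?x = "x(Suc k := y)"
  have "y \<in> V" "E (x k) y" "\<forall>i<k. \<not> E (x i) y" "\<forall>i\<le>k. x i \<noteq> y"
    using y C'V nonb xnot unfolding N_def by auto
  then have "induced_path V E ?x (Suc k)" by (rule induced_path_extend[OF G ip])
  moreover have "\<forall>i\<in>{1..Suc k}. ?x i \<in> C" using xC y C'C by (auto simp: le_Suc_eq)
  moreover have "D \<subseteq> C" using DC' C'C by blast
  moreover have "\<forall>i\<le>Suc k. ?x i \<notin> D" using DC' xnot y by (auto simp: le_Suc_eq)
  moreover have "connected_in E D" unfolding D_def by (rule connected_in_component[OF G])
  moreover have "\<exists>c\<in>D. E (?x (Suc k)) c" using z zy graph_sym[OF G] by auto
  moreover have "\<forall>i<Suc k. \<forall>c\<in>D. \<not> E (?x i) c"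
    using DC' nonb unfolding N_def by (auto simp: less_Suc_eq)
  ultimately have "approach V E C ?x (Suc k) D" unfolding approach_def by blast
  moreover have "chi E C' \<le> chi E D + chi1 V E" using dchi unfolding D_def .
  ultimately show ?thesis by blast
qed

lemma approach_exists:
  assumes G: "graph V E" and CV: "C \<subseteq> V" and x0: "x0 \<in> V - C"
    and conn: "connected_in E C" and nb: "\<exists>c\<in>C. E x0 c"
  shows "k * chi1 V E < chi E C \<Longrightarrow>
    \<exists>x C'. x 0 = x0 \<and> approach V E C x k C' \<and> chi E C \<le> chi E C' + k * chi1 V E"
proof (induction k)
  case 0
  have "induced_path V E (\<lambda>_. x0) 0" unfolding induced_path_def using x0 graph_irrefl[OF G] by auto
  then have "approach V E C (\<lambda>_. x0) 0 C" unfolding approach_def using x0 conn nb by auto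
  then show ?case by auto
next
  case (Suc k)
  then have "k * chi1 V E < chi E C" by simp
  with Suc.IH obtain x C' where "x 0 = x0" and A: "approach V E C x k C'"
    and bound: "chi E C \<le> chi E C' + k * chi1 V E"
    by blast
  have "chi1 V E < chi E C'" using Suc.prems bound by simp
  then obtain y D where step: "approach V E C (x(Suc k := y)) (Suc k) D"
    and grow: "chi E C' \<le> chi E D + chi1 V E"
    using approach_step[OF G CV A] by blast
  have "(x(Suc k := y)) 0 = x0" using \<open>x 0 = x0\<close> by simp
  moreover have "chi E C \<le> chi E D + Suc k * chi1 V E" using bound grow by simp
  ultimately show ?case using step by blast
qed

theorem mainTheorem4:
  fixes V :: "'a set" and E :: "'a \<Rightarrow> 'a \<Rightarrow> bool" and k :: nat and C :: "'a set" and x0 :: 'a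
  assumes "graph V E"
    and "C \<subseteq> V"
    and "x0 \<in> V - C"
    and "connected_in E C"
    and "\<exists>c\<in>C. E x0 c"
    and "chi E C > k * chi1 V E"
  shows "\<exists>(x :: nat \<Rightarrow> 'a) C'. x 0 = x0 \<and> induced_path V E x k \<and> (\<forall>i\<in>{1..k}. x i \<in> C)
     \<and> C' \<subseteq> C \<and> (\<forall>i\<le>k. x i \<notin> C') \<and> connected_in E C'
     \<and> (\<exists>c\<in>C'. E (x k) c) \<and> (\<forall>i<k. \<forall>c\<in>C'. \<not> E (x i) c)
     \<and> int (chi E C') \<ge> int (chi E C) - int k * int (chi1 V E)"
proof -
  obtain x C' where "x 0 = x0" "approach V E C x k C'" "chi E C \<le> chi E C' + k * chi1 V E"
    using approach_exists[OF assms(1-5)] assms(6) by blast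
  moreover have "int (chi E C') \<ge> int (chi E C) - int k * int (chi1 V E)"
  proof -
    have "int (chi E C) \<le> int (chi E C' + k * chi1 V E)"
      using \<open>chi E C \<le> chi E C' + k * chi1 V E\<close> by (simp only: of_nat_le_iff)
    then show ?thesis by simp
  qed
  ultimately show ?thesis unfolding approach_def by blast
qed

end
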